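(* Let $p\ge1$, $\phi_1,\dots,\phi_p:\mathbb Z\to\mathbb C$, integers $t>s$, $1\le m\le p$, and $n=t-s$. (i) For $1\le i\le n$, the cofactor of the $(i,1)$ entry (which is $\phi_{m+i-1}(s+i)$) of $\Phi^{(m)}_{t,s}$ equals $\xi_{t,s+i}$. (ii) For each entry in the last row of $\Phi^{(m)}_{t,s}$, written as $\phi_l(t)$ (so $l=n-j+1$ for the $(n,j)$ entry with $j\ge2$, and $l=m+n-1$ for the $(n,1)$ entry), its cofactor equals $\xi^{(m)}_{t-l,s}$.
   Context: Convention: $\phi_l(t)=0$ for $l>p$. For integers $t>s$ and $1\le m\le p$, $\Phi^{(m)}_{t,s}$ is the $(t-s)\times(t-s)$ lower Hessenberg matrix whose $(i,j)$ entry is: $\phi_{m+i-1}(s+i)$ if $j=1$; $-1$ if $j=i+1$; $\phi_{i-j+1}(s+i)$ if $2\le j\le i$; $0$ if $j>i+1$. For $t\ge s-p+1$: $\xi^{(m)}_{t,s}=\det\Phi^{(m)}_{t,s}$ if $t>s$; $\xi^{(m)}_{t,s}=1$ if $t=s-m+1$; $\xi^{(m)}_{t,s}=0$ if $s-p+1\le t\le s$, $t\ne s-m+1$. The principal determinant is $\xi_{t,s}=\xi^{(1)}_{t,s}$ (so $\xi_{t,t}=1$). The cofactor of the $(i,j)$ entry of a square matrix is $(-1)^{i+j}$ times the determinant of the matrix with row $i$ and column $j$ deleted. *)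

theory Defs
  imports "Jordan_Normal_Form.Determinant"
begin

definition coef :: "nat \<Rightarrow> (nat \<Rightarrow> int \<Rightarrow> complex) \<Rightarrow> nat \<Rightarrow> int \<Rightarrow> complex" where
  "coef p phi l u = (if l \<le> p then phi l u else 0)"

text \<open>The (t-s) x (t-s) lower Hessenberg matrix Phi^(m)_{t,s}; the 1-based entry (i,j)
  is stored at the 0-based position (i-1,j-1).\<close>
definition PhiMat :: "nat \<Rightarrow> (nat \<Rightarrow> int \<Rightarrow> complex) \<Rightarrow> nat \<Rightarrow> int \<Rightarrow> int \<Rightarrow> complex mat" where
  "PhiMat p phi m t s = mat (nat (t - s)) (nat (t - s)) (\<lambda>(a, b).
     let i = a + 1; j = b + 1 in
     if j = 1 then coef p phi (m + i - 1) (s + int i)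
     else if j = i + 1 then -1
     else if j \<le> i then coef p phi (i - j + 1) (s + int i)
     else 0)"

text \<open>xi^(m)_{t,s}; only meaningful for t \<ge> s-p+1 (value 0 below that range).\<close>
definition xi_m :: "nat \<Rightarrow> (nat \<Rightarrow> int \<Rightarrow> complex) \<Rightarrow> nat \<Rightarrow> int \<Rightarrow> int \<Rightarrow> complex" where
  "xi_m p phi m t s = (if t > s then det (PhiMat p phi m t s)
                       else if t = s - int m + 1 then 1 else 0)"

definition xi :: "nat \<Rightarrow> (nat \<Rightarrow> int \<Rightarrow> complex) \<Rightarrow> int \<Rightarrow> int \<Rightarrow> complex" where
  "xi p phi t s = xi_m p phi 1 t s"

text \<open>Cofactor of the 1-based (i,j) entry (JNF's cofactor is 0-based; the sign is unchanged).\<close>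
definition cof1 :: "complex mat \<Rightarrow> nat \<Rightarrow> nat \<Rightarrow> complex" where
  "cof1 A i j = cofactor A (i - 1) (j - 1)"

end

theory Submission imports Defs begin

text \<open>Deleting row i and column 1 of Phi^(m)_{t,s} leaves a block lower triangular matrix:
  the first i-1 rows keep only their superdiagonal entries -1, and the remaining block is
  Phi^(1)_{t,s+i}, so the cofactor is xi_{t,s+i} (for the last row this is xi_{t,t} = 1, matching
  the convention xi^(m)_{s-m+1,s} = 1). Deleting the last row and column j >= 2 instead leaves the
  leading block Phi^(m)_{s+j-1,s} followed by a triangular block of -1's, whose sign cancels
  the sign of the cofactor.\<close>

lemma det_block_lower_triangular:
  fixes M :: "'a::idom mat"
  assumes M: "M \<in> carrier_mat (k + l) (k + l)"
    and upper_right: "\<And>r c. r < k \<Longrightarrow> k \<le> c \<Longrightarrow> c < k + l \<Longrightarrow> M $$ (r, c) = 0"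
  shows "det M = det (mat k k (\<lambda>(r, c). M $$ (r, c)))
               * det (mat l l (\<lambda>(r, c). M $$ (k + r, k + c)))"
proof -
  let ?A = "mat k k (\<lambda>(r, c). M $$ (r, c))"
  let ?C = "mat l k (\<lambda>(r, c). M $$ (k + r, c))"
  let ?D = "mat l l (\<lambda>(r, c). M $$ (k + r, k + c))"
  have "M = four_block_mat ?A (0\<^sub>m k l) ?C ?D"
    by (rule eq_matI) (use M upper_right in auto)
  then show ?thesis
    using det_four_block_mat_upper_right_zero[of ?A k "0\<^sub>m k l" l ?C ?D] by simp
qed

lemma det_lower_triangular_const_diag:
  fixes d :: "'a::comm_ring_1"
  assumes "\<And>r. r < k \<Longrightarrow> f (r, r) = d"
    and "\<And>r c. r < c \<Longrightarrow> c < k \<Longrightarrow> f (r, c) = 0"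
  shows "det (mat k k f) = d ^ k"
proof -
  have "det (mat k k f) = prod_list (diag_mat (mat k k f))"
    by (rule det_lower_triangular[of k]) (use assms in auto)
  also have "\<dots> = (\<Prod>i = 0..<k. d)"
    unfolding prod_list_diag_prod using assms(1) by simp
  finally show ?thesis by simp
qed

lemma index_mat_delete:
  assumes "r < dim_row A - 1" and "c < dim_col A - 1"
  shows "mat_delete A i j $$ (r, c) =
    A $$ (if r < i then r else Suc r, if c < j then c else Suc c)"
  using assms unfolding mat_delete_def by simp

lemma PhiMat_carrier: "PhiMat p phi m t s \<in> carrier_mat (nat (t - s)) (nat (t - s))"
  unfolding PhiMat_def by auto

lemma dim_PhiMat [simp]:
  "dim_row (PhiMat p phi m t s) = nat (t - s)"
  "dim_col (PhiMat p phi m t s) = nat (t - s)"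
  unfolding PhiMat_def by simp_all

lemma index_PhiMat:
  assumes "a < nat (t - s)" and "b < nat (t - s)"
  shows "PhiMat p phi m t s $$ (a, b) =
    (if b = 0 then coef p phi (m + a) (s + int (a + 1))
     else if b = a + 1 then -1
     else if b \<le> a then coef p phi (a - b + 1) (s + int (a + 1))
     else 0)"
  using assms unfolding PhiMat_def by (auto simp: Let_def)

lemma PhiMat_leading_block:
  assumes "j \<le> nat (t - s)"
  shows "mat j j (\<lambda>(r, c). PhiMat p phi m t s $$ (r, c)) = PhiMat p phi m (s + int j) s"
  by (rule eq_matI) (use assms in \<open>auto simp: index_PhiMat\<close>)

lemma PhiMat_trailing_block:
  assumes "1 \<le> k" and "k \<le> nat (t - s)"
  shows "mat (nat (t - s) - k) (nat (t - s) - k) (\<lambda>(r, c). PhiMat p phi m t s $$ (k + r, k + c))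
       = PhiMat p phi 1 t (s + int k)"
proof -
  have n: "nat (t - (s + int k)) = nat (t - s) - k" using assms by linarith
  have shift: "s + int (k + r + 1) = s + int k + int (r + 1)" for r by simp
  show ?thesis
    by (rule eq_matI) (use assms n in \<open>auto simp: index_PhiMat shift ac_simps\<close>)
qed

lemma xi_eq_det_PhiMat:
  assumes "s \<le> t"
  shows "xi p phi t s = det (PhiMat p phi 1 t s)"
proof (cases "s < t")
  case False
  with assms have "PhiMat p phi 1 t s \<in> carrier_mat 0 0"
    using PhiMat_carrier[of p phi 1 t s] by simp
  with False assms show ?thesis unfolding xi_def xi_m_def by simp
qed (simp add: xi_def xi_m_def)

lemma cofactor_PhiMat_first_column:
  assumes i: "i < nat (t - s)"
  shows "cofactor (PhiMat p phi m t s) i 0 = xi p phi t (s + int (i + 1))"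
proof -
  obtain l where l: "nat (t - s) = Suc l" using i by (cases "nat (t - s)") auto
  let ?P = "PhiMat p phi m t s"
  let ?M = "mat_delete ?P i 0"
  have M: "?M \<in> carrier_mat (i + (l - i)) (i + (l - i))"
    using mat_delete_carrier[OF PhiMat_carrier, of p phi m t s i 0] i l by auto
  have M_index: "?M $$ (r, c) = ?P $$ (if r < i then r else Suc r, Suc c)"
    if "r < l" "c < l" for r c
    using that l by (simp add: index_mat_delete)
  have "det ?M = det (mat i i (\<lambda>(r, c). ?M $$ (r, c)))
               * det (mat (l - i) (l - i) (\<lambda>(r, c). ?M $$ (i + r, i + c)))"
    by (rule det_block_lower_triangular[OF M]) (use i l in \<open>auto simp: M_index index_PhiMat\<close>)
  also have "det (mat i i (\<lambda>(r, c). ?M $$ (r, c))) = (-1) ^ i"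
    by (rule det_lower_triangular_const_diag) (use i l in \<open>auto simp: M_index index_PhiMat\<close>)
  also have "mat (l - i) (l - i) (\<lambda>(r, c). ?M $$ (i + r, i + c))
           = mat (nat (t - s) - (i + 1)) (nat (t - s) - (i + 1))
               (\<lambda>(r, c). ?P $$ (i + 1 + r, i + 1 + c))"
    by (rule eq_matI) (auto simp: M_index l)
  also have "\<dots> = PhiMat p phi 1 t (s + int (i + 1))"
    by (rule PhiMat_trailing_block) (use i in auto)
  finally have "det ?M = (-1) ^ i * det (PhiMat p phi 1 t (s + int (i + 1)))" .
  moreover have "xi p phi t (s + int (i + 1)) = det (PhiMat p phi 1 t (s + int (i + 1)))"
    by (rule xi_eq_det_PhiMat) (use i in linarith)
  ultimately show ?thesis unfolding cofactor_def by simp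
qed

lemma cofactor_PhiMat_last_row:
  assumes j: "1 \<le> j" "j < nat (t - s)"
  shows "cofactor (PhiMat p phi m t s) (nat (t - s) - 1) j = xi_m p phi m (s + int j) s"
proof -
  obtain l where l: "nat (t - s) = Suc l" using j by (cases "nat (t - s)") auto
  let ?P = "PhiMat p phi m t s"
  let ?M = "mat_delete ?P l j"
  have M: "?M \<in> carrier_mat (j + (l - j)) (j + (l - j))"
    using mat_delete_carrier[OF PhiMat_carrier, of p phi m t s l j] j l by auto
  have M_index: "?M $$ (r, c) = ?P $$ (r, if c < j then c else Suc c)"
    if "r < l" "c < l" for r c
    using that l by (simp add: index_mat_delete)
  have "det ?M = det (mat j j (\<lambda>(r, c). ?M $$ (r, c)))
               * det (mat (l - j) (l - j) (\<lambda>(r, c). ?M $$ (j + r, j + c)))"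
    by (rule det_block_lower_triangular[OF M]) (use j l in \<open>auto simp: M_index index_PhiMat\<close>)
  also have "mat j j (\<lambda>(r, c). ?M $$ (r, c)) = mat j j (\<lambda>(r, c). ?P $$ (r, c))"
    by (rule eq_matI) (use j l in \<open>auto simp: M_index\<close>)
  also have "\<dots> = PhiMat p phi m (s + int j) s"
    by (rule PhiMat_leading_block) (use j in auto)
  also have "det (mat (l - j) (l - j) (\<lambda>(r, c). ?M $$ (j + r, j + c))) = (-1) ^ (l - j)"
    by (rule det_lower_triangular_const_diag) (use j l in \<open>auto simp: M_index index_PhiMat\<close>)
  finally have "det ?M = det (PhiMat p phi m (s + int j) s) * (-1) ^ (l - j)" .
  moreover have "(-1::complex) ^ (l + j) * (-1) ^ (l - j) = 1"
  proof -
    have "(-1::complex) ^ (l + j) * (-1) ^ (l - j) = (-1) ^ (2 * l)"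
      using j l by (simp add: power_add[symmetric])
    then show ?thesis by (simp add: power_mult)
  qed
  moreover have "xi_m p phi m (s + int j) s = det (PhiMat p phi m (s + int j) s)"
    using j by (simp add: xi_m_def)
  ultimately show ?thesis
    unfolding cofactor_def l by (metis diff_Suc_1 mult.assoc mult.commute mult_1)
qed

theorem lemma1:
  fixes p m :: nat and phi :: "nat \<Rightarrow> int \<Rightarrow> complex" and t s :: int
  assumes "p \<ge> 1" and "t > s" and "1 \<le> m" and "m \<le> p"
  shows "(\<forall>i. 1 \<le> i \<and> i \<le> nat (t - s) \<longrightarrow>
            cof1 (PhiMat p phi m t s) i 1 = xi p phi t (s + int i))
       \<and> cof1 (PhiMat p phi m t s) (nat (t - s)) 1
            = xi_m p phi m (t - int (m + nat (t - s) - 1)) s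
       \<and> (\<forall>j. 2 \<le> j \<and> j \<le> nat (t - s) \<longrightarrow>
            cof1 (PhiMat p phi m t s) (nat (t - s)) j
              = xi_m p phi m (t - int (nat (t - s) - j + 1)) s)"
proof (intro conjI allI impI)
  fix i assume i: "1 \<le> i \<and> i \<le> nat (t - s)"
  then have "i - 1 < nat (t - s)" by linarith
  with i show "cof1 (PhiMat p phi m t s) i 1 = xi p phi t (s + int i)"
    using cofactor_PhiMat_first_column[of "i - 1" t s p phi m] by (simp add: cof1_def)
next
  have "cof1 (PhiMat p phi m t s) (nat (t - s)) 1 = xi p phi t t"
    using cofactor_PhiMat_first_column[of "nat (t - s) - 1" t s p phi m] assms
    by (simp add: cof1_def)
  also have "\<dots> = xi_m p phi m (t - int (m + nat (t - s) - 1)) s"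
    using assms by (simp add: xi_def xi_m_def)
  finally show "cof1 (PhiMat p phi m t s) (nat (t - s)) 1
              = xi_m p phi m (t - int (m + nat (t - s) - 1)) s" .
next
  fix j assume j: "2 \<le> j \<and> j \<le> nat (t - s)"
  then have shift: "t - int (nat (t - s) - j + 1) = s + int (j - 1)" by linarith
  have "cof1 (PhiMat p phi m t s) (nat (t - s)) j = xi_m p phi m (s + int (j - 1)) s"
    unfolding cof1_def by (rule cofactor_PhiMat_last_row) (use j in auto)
  then show "cof1 (PhiMat p phi m t s) (nat (t - s)) j
             = xi_m p phi m (t - int (nat (t - s) - j + 1)) s" unfolding shift .
qed

end
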